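(* Let $(q_n)$ be the Fibonacci Quilt sequence. Then (1) $2q_n=q_{n+2}+q_{n-5}$ for all $n\ge7$; (2) $q_n+q_{n-2}=q_{n+1}+q_{n-5}$ for all $n\ge8$; (3) $q_n+q_{n-3}=q_{n+1}+q_{n-8}$ for all $n\ge10$.
   Context: Given an increasing sequence of positive integers $(q_i)_{i\ge1}$, an FQ-legal decomposition of an integer $m\ge0$ is an expression $m=q_{\ell_1}+q_{\ell_2}+\cdots+q_{\ell_t}$ ($t\ge0$, the empty sum representing $0$) with distinct indices $\ell_1>\ell_2>\cdots>\ell_t$ such that $|\ell_i-\ell_j|\notin\{1,3,4\}$ for all $i,j$, and $\{1,3\}\not\subset\{\ell_1,\dots,\ell_t\}$. The Fibonacci Quilt sequence is the increasing sequence of positive integers $(q_i)_{i\ge1}$ in which each $q_i$ is the smallest positive integer having no FQ-legal decomposition using only $q_1,\dots,q_{i-1}$. Its first terms are $1,2,3,4,5,7,9,12,16,21,28,37,49,\dots$. *)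

theory Defs
  imports Main
begin

definition fq_legal :: "nat set \<Rightarrow> bool" where
  "fq_legal S \<longleftrightarrow> finite S \<and> 0 \<notin> S \<and>
     (\<forall>i\<in>S. \<forall>j\<in>S. (i - j) \<notin> {1,3,4}) \<and> \<not> ({1,3} \<subseteq> S)"

definition has_fq_decomp :: "(nat \<Rightarrow> nat) \<Rightarrow> nat \<Rightarrow> nat \<Rightarrow> bool" where
  "has_fq_decomp q i m \<longleftrightarrow> (\<exists>S. S \<subseteq> {1..<i} \<and> fq_legal S \<and> (\<Sum>j\<in>S. q j) = m)"

definition is_fibonacci_quilt :: "(nat \<Rightarrow> nat) \<Rightarrow> bool" where
  "is_fibonacci_quilt q \<longleftrightarrow>
     (\<forall>i\<ge>1. q i = (LEAST m. 0 < m \<and> \<not> has_fq_decomp q i m))"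

end

theory Submission
  imports Defs
begin

text \<open>The Fibonacci Quilt sequence is the sequence \<open>fq\<close> with \<open>fq n = n\<close> for \<open>n \<le> 5\<close> and
  \<open>fq n = fq (n - 2) + fq (n - 3)\<close> beyond. To see this, one checks that \<open>fq\<close> satisfies the
  defining property: every \<open>m < fq n\<close> has a legal decomposition below index \<open>n\<close> (greedily,
  using the second recurrence \<open>fq n = fq (n - 1) + fq (n - 5)\<close>), while \<open>fq n\<close> itself has none
  (by case analysis on the largest summand, together with the bound \<open>fq (k + 2)\<close> on legal sums
  of indices below \<open>k\<close>). The three identities then follow from the two recurrences.\<close>

fun fq :: "nat \<Rightarrow> nat" where
  "fq n = (if n \<le> 5 then n else fq (n - 2) + fq (n - 3))"

declare fq.simps [simp del]

lemma fq_small: "n \<le> 5 \<Longrightarrow> fq n = n"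
  by (simp add: fq.simps)

lemma fq_6 [simp]: "fq 6 = 7"
  by (simp add: fq.simps)

lemma fq_rec: "6 \<le> n \<Longrightarrow> fq n = fq (n - 2) + fq (n - 3)"
  by (subst fq.simps) simp

lemma fq_less_Suc: "fq n < fq (Suc n)"
proof (induction n rule: less_induct)
  case (less n)
  consider "n \<le> 4" | "n = 5" | "6 \<le> n" by linarith
  then show ?case
  proof cases
    case 3
    have "Suc (n - 3) = n - 2" "Suc (n - 2) = n - 1" using 3 by simp_all
    then have "fq (n - 3) < fq (n - 2)" "fq (n - 2) < fq (n - 1)"
      using less.IH[of "n - 3"] less.IH[of "n - 2"] 3 by simp_all
    then show ?thesis using fq_rec[of n] fq_rec[of "Suc n"] 3 by simp
  qed (simp_all add: fq_small)
qed

lemma strict_mono_fq: "strict_mono fq"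
  unfolding strict_mono_Suc_iff by (rule allI) (rule fq_less_Suc)

lemma fq_less_iff [simp]: "fq i < fq j \<longleftrightarrow> i < j"
  using strict_mono_fq by (rule strict_mono_less)

lemma fq_rec_shift: "7 \<le> n \<Longrightarrow> fq n = fq (n - 1) + fq (n - 5)"
proof (induction n rule: less_induct)
  case (less n)
  show ?case
  proof (cases "n \<le> 10")
    case True
    then consider "n = 7" | "n = 8" | "n = 9" | "n = 10" using less.prems by linarith
    then show ?thesis by cases (simp_all add: fq_rec fq_small)
  next
    case False
    have "fq (n - 2) = fq (n - 3) + fq (n - 7)" "fq (n - 3) = fq (n - 4) + fq (n - 8)"
      using less.IH[of "n - 2"] less.IH[of "n - 3"] False by (simp_all add: numeral_eq_Suc)
    moreover have "fq (n - 1) = fq (n - 3) + fq (n - 4)" "fq (n - 5) = fq (n - 7) + fq (n - 8)"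
      using fq_rec[of "n - 1"] fq_rec[of "n - 5"] False by (simp_all add: numeral_eq_Suc)
    ultimately show ?thesis using fq_rec[of n] False by simp
  qed
qed

lemma fq_add_le: "fq k + fq (Suc k) \<le> fq (k + 3)"
proof (cases "3 \<le> k")
  case True
  then show ?thesis using fq_rec[of "k + 3"] by simp
next
  case False
  then consider "k = 0" | "k = 1" | "k = 2" by linarith
  then show ?thesis by cases (simp_all add: fq_small)
qed

lemma fq_legal_subset: "fq_legal S \<Longrightarrow> T \<subseteq> S \<Longrightarrow> fq_legal T"
  unfolding fq_legal_def by (auto intro: finite_subset)

lemma fq_legal_diff: "fq_legal S \<Longrightarrow> i \<in> S \<Longrightarrow> j \<in> S \<Longrightarrow> i - j \<notin> {1, 3, 4}"
  unfolding fq_legal_def by blast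

lemma fq_legal_insert:
  assumes "fq_legal S" "0 < k" "\<And>j. j \<in> S \<Longrightarrow> j + 4 < k"
  shows "fq_legal (insert k S)"
  unfolding fq_legal_def
proof (intro conjI ballI)
  show "finite (insert k S)" "0 \<notin> insert k S" "\<not> {1, 3} \<subseteq> insert k S"
    using assms unfolding fq_legal_def by (auto dest: assms(3))
  show "i - j \<notin> {1, 3, 4}" if "i \<in> insert k S" "j \<in> insert k S" for i j
    using that fq_legal_diff[OF assms(1)] assms(3)[of i] assms(3)[of j] by auto
qed

lemma sum_fq_less:
  assumes "fq_legal S" "S \<subseteq> {..<k}"
  shows "sum fq S < fq (k + 2)"
  using assms
proof (induction k arbitrary: S rule: less_induct)
  case (less k)
  show ?case
  proof (cases "k = 0")
    case True
    then show ?thesis using less.prems by (simp add: fq_small)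
  next
    case False
    then obtain j where k: "k = Suc j" using not0_implies_Suc by blast
    show ?thesis
    proof (cases "j \<in> S")
      case False
      then have "S \<subseteq> {..<j}" using less.prems(2) k by (auto simp: less_Suc_eq)
      then have "sum fq S < fq (j + 2)" using less.IH[of j] less.prems(1) k by blast
      also have "\<dots> < fq (k + 2)" using k by simp
      finally show ?thesis .
    next
      case True
      have "0 < j" using True less.prems(1) unfolding fq_legal_def by (auto intro: gr0I)
      then have "j - 1 \<notin> S" using fq_legal_diff[OF less.prems(1) True, of "j - 1"] by auto
      then have "x < j - 1" if "x \<in> S - {j}" for x
        using that less.prems(2) k by (cases "x = j - 1") (auto simp: subset_iff)
      then have "S - {j} \<subseteq> {..<j - 1}" by blast
      then have "sum fq (S - {j}) < fq (Suc j)"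
        using less.IH[of "j - 1"] fq_legal_subset[OF less.prems(1)] k \<open>0 < j\<close> by force
      moreover have "sum fq S = fq j + sum fq (S - {j})"
        using True less.prems(1) by (simp add: fq_legal_def sum.remove)
      ultimately have "sum fq S < fq (j + 3)" using fq_add_le[of j] by linarith
      then show ?thesis using k by (simp add: eval_nat_numeral)
    qed
  qed
qed

text \<open>The legal subsets of \<open>{1..5}\<close> are \<open>{}\<close>, the singletons, \<open>{2, 4}\<close> and \<open>{3, 5}\<close>.\<close>

lemma sum_fq_neq_small:
  assumes "fq_legal S" "S \<subseteq> {1..<n}" "0 < n" "n \<le> 6"
  shows "sum fq S \<noteq> fq n"
proof -
  have "S \<subseteq> {1, 2, 3, 4, 5}" using assms(2,4) by auto
  then have sum: "sum fq S = (\<Sum>j\<in>{1, 2, 3, 4, 5}. if j \<in> S then fq j else 0)"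
    by (simp add: sum.If_cases Int_absorb1 Int_absorb2)
  have excl: "\<not> (i \<in> S \<and> j \<in> S)" if "i - j \<in> {1, 3, 4}" for i j
    using fq_legal_diff[OF assms(1)] that by blast
  have "\<not> (1 \<in> S \<and> 3 \<in> S)" using assms(1) unfolding fq_legal_def by auto
  moreover have below: "j \<in> S \<Longrightarrow> j < n" for j using assms(2) by auto
  moreover have "n = 1 \<or> n = 2 \<or> n = 3 \<or> n = 4 \<or> n = 5 \<or> n = 6" using assms(3,4) by auto
  ultimately show ?thesis
    unfolding sum using excl[of 2 1] excl[of 3 2] excl[of 4 3] excl[of 5 4]
      excl[of 4 1] excl[of 5 2] excl[of 5 1] below[of 1] below[of 2] below[of 3] below[of 4]
      below[of 5]
    by (cases "1 \<in> S"; cases "2 \<in> S"; cases "3 \<in> S"; cases "4 \<in> S"; cases "5 \<in> S")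
       (auto simp: fq_small)
qed

lemma sum_fq_neq:
  assumes "fq_legal S" "S \<subseteq> {1..<n}" "0 < n"
  shows "sum fq S \<noteq> fq n"
  using assms
proof (induction n arbitrary: S rule: less_induct)
  case (less n)
  show ?case
  proof (cases "n \<le> 6")
    case True
    then show ?thesis using sum_fq_neq_small less.prems by blast
  next
    case False
    then have n: "7 \<le> n" by simp
    have fin: "finite S" using less.prems(1) unfolding fq_legal_def by blast
    show ?thesis
    proof (cases "S = {}")
      case True
      have "fq 0 < fq n" using n by simp
      then show ?thesis using True by (simp add: fq_small)
    next
      case False
      define k where "k = Max S"
      have kS: "k \<in> S" and kmax: "\<And>j. j \<in> S \<Longrightarrow> j \<le> k"
        using fin False by (simp_all add: k_def)
      have "k < n" using kS less.prems(2) by auto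
      have rest: "fq_legal (S - {k})" using fq_legal_subset[OF less.prems(1)] by blast
      have sum: "sum fq S = fq k + sum fq (S - {k})" using fin kS by (simp add: sum.remove)
      have far: "j < k \<and> k - j \<notin> {1, 3, 4}" if "j \<in> S - {k}" for j
        using that kmax[of j] fq_legal_diff[OF less.prems(1) kS, of j] by force
      have pos: "0 < j" if "j \<in> S" for j using that less.prems(2) by auto
      consider "k \<le> n - 3" | "k = n - 2" | "k = n - 1" using \<open>k < n\<close> by linarith
      then show ?thesis
      proof cases
        case 1
        then have "S \<subseteq> {..<n - 2}" using kmax n by fastforce
        then have "sum fq S < fq (n - 2 + 2)" by (rule sum_fq_less[OF less.prems(1)])
        also have "n - 2 + 2 = n" using n by simp
        finally show ?thesis by simp
      next
        case 2
        have "j \<in> {1..<n - 3}" if "j \<in> S - {k}" for j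
          using far[OF that] pos[of j] that 2 by auto
        then have "sum fq (S - {k}) \<noteq> fq (n - 3)"
          using less.IH[of "n - 3"] rest n by (simp add: subset_iff)
        then show ?thesis using sum 2 fq_rec[of n] n by simp
      next
        case 3
        show ?thesis
        proof (cases "n - 3 \<in> S")
          case True
          then have "fq (n - 3) \<le> sum fq (S - {k})"
            using fin 3 n by (intro member_le_sum) auto
          moreover have "fq (n - 5) < fq (n - 3)" using n by simp
          ultimately show ?thesis using sum fq_rec_shift[of n] n unfolding 3 by linarith
        next
          case False
          have "j \<in> {1..<n - 5}" if "j \<in> S - {k}" for j
            using far[OF that] pos[of j] that False 3 n by (cases "j = n - 3") auto
          then have "sum fq (S - {k}) \<noteq> fq (n - 5)"
            using less.IH[of "n - 5"] rest n by (simp add: subset_iff)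
          then show ?thesis using sum 3 fq_rec_shift[of n] n by simp
        qed
      qed
    qed
  qed
qed

lemma has_fq_decomp_mono: "has_fq_decomp q i m \<Longrightarrow> i \<le> j \<Longrightarrow> has_fq_decomp q j m"
  unfolding has_fq_decomp_def by (metis atLeastLessThan_iff order.strict_trans2 subset_iff)

lemma has_fq_decomp_fq: "m < fq n \<Longrightarrow> has_fq_decomp fq n m"
proof (induction n arbitrary: m rule: less_induct)
  case (less n)
  consider "m = 0" | "0 < m" "n \<le> 6" | "0 < m" "7 \<le> n" by linarith
  then show ?case
  proof cases
    case 1
    show ?thesis unfolding has_fq_decomp_def
      by (intro exI[of _ "{}"]) (simp add: 1 fq_legal_def)
  next
    case 2
    show ?thesis
    proof (cases "m \<le> 5")
      case True
      then have "m < n" using less.prems 2 by (cases "n = 6") (auto simp: fq_small)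
      then show ?thesis unfolding has_fq_decomp_def
        using 2 by (intro exI[of _ "{m}"]) (auto simp: fq_legal_def fq_small True)
    next
      case False
      then have "n = 6" "m = 6" using less.prems 2 fq_small[of n] by (cases "n = 6"; auto)+
      then show ?thesis unfolding has_fq_decomp_def
        by (intro exI[of _ "{2, 4}"]) (auto simp: fq_legal_def fq_small)
    qed
  next
    case 3
    show ?thesis
    proof (cases "m < fq (n - 1)")
      case True
      then have "has_fq_decomp fq (n - 1) m" using less.IH[of "n - 1"] 3 by simp
      then show ?thesis by (rule has_fq_decomp_mono) simp
    next
      case False
      then have "m - fq (n - 1) < fq (n - 5)" using less.prems fq_rec_shift[of n] 3 by linarith
      then obtain S where S: "S \<subseteq> {1..<n - 5}" "fq_legal S" "sum fq S = m - fq (n - 1)"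
        using less.IH[of "n - 5"] 3 unfolding has_fq_decomp_def by auto
      have "fq_legal (insert (n - 1) S)" by (rule fq_legal_insert) (use S 3 in \<open>auto simp: subset_iff\<close>)
      moreover have "sum fq (insert (n - 1) S) = m"
      proof -
        have "finite S" using S(2) unfolding fq_legal_def by blast
        moreover have "n - 1 \<notin> S" using S(1) 3 by (auto simp: subset_iff)
        ultimately show ?thesis using S(3) False by simp
      qed
      moreover have "insert (n - 1) S \<subseteq> {1..<n}" using S 3 by (auto simp: subset_iff)
      ultimately show ?thesis unfolding has_fq_decomp_def by blast
    qed
  qed
qed

lemma is_fibonacci_quilt_fq: "is_fibonacci_quilt fq"
  unfolding is_fibonacci_quilt_def
proof (intro allI impI)
  fix i :: nat
  assume "1 \<le> i"
  show "fq i = (LEAST m. 0 < m \<and> \<not> has_fq_decomp fq i m)"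
  proof (rule Least_equality[symmetric])
    have "fq 0 < fq i" using \<open>1 \<le> i\<close> by simp
    then show "0 < fq i \<and> \<not> has_fq_decomp fq i (fq i)"
      using \<open>1 \<le> i\<close> sum_fq_neq unfolding has_fq_decomp_def by (auto simp: fq_small)
    show "fq i \<le> m" if "0 < m \<and> \<not> has_fq_decomp fq i m" for m
      using that has_fq_decomp_fq not_le by blast
  qed
qed

lemma has_fq_decomp_cong:
  assumes "\<And>j. 1 \<le> j \<Longrightarrow> j < i \<Longrightarrow> q j = p j"
  shows "has_fq_decomp q i = has_fq_decomp p i"
proof -
  have "sum q S = sum p S" if "S \<subseteq> {1..<i}" for S
    using that assms by (intro sum.cong) auto
  then show ?thesis unfolding has_fq_decomp_def by metis
qed

lemma fibonacci_quilt_unique: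
  assumes "is_fibonacci_quilt q" "is_fibonacci_quilt p" "1 \<le> i"
  shows "q i = p i"
  using assms(3)
proof (induction i rule: less_induct)
  case (less i)
  then have "has_fq_decomp q i = has_fq_decomp p i" by (intro has_fq_decomp_cong) simp
  then show ?case using assms(1,2) less.prems unfolding is_fibonacci_quilt_def by simp
qed

lemma fq_double: "7 \<le> n \<Longrightarrow> 2 * fq n = fq (n + 2) + fq (n - 5)"
  using fq_rec[of "n + 2"] fq_rec_shift[of n] by simp

lemma fq_add_diff_2: "8 \<le> n \<Longrightarrow> fq n + fq (n - 2) = fq (n + 1) + fq (n - 5)"
  using fq_rec[of "n + 1"] fq_rec_shift[of n] by simp

lemma fq_add_diff_3: "10 \<le> n \<Longrightarrow> fq n + fq (n - 3) = fq (n + 1) + fq (n - 8)"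
  using fq_rec_shift[of "n + 1"] fq_rec_shift[of "n - 3"] by (simp add: numeral_eq_Suc)

theorem mainTheorem17:
  fixes q :: "nat \<Rightarrow> nat"
  assumes "is_fibonacci_quilt q"
  shows "(\<forall>n\<ge>7. 2 * q n = q (n + 2) + q (n - 5))
       \<and> (\<forall>n\<ge>8. q n + q (n - 2) = q (n + 1) + q (n - 5))
       \<and> (\<forall>n\<ge>10. q n + q (n - 3) = q (n + 1) + q (n - 8))"
proof -
  have q: "q i = fq i" if "1 \<le> i" for i
    using fibonacci_quilt_unique[OF assms is_fibonacci_quilt_fq that] .
  show ?thesis
    using fq_double fq_add_diff_2 fq_add_diff_3 by (simp add: q)
qed

end
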